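(* Let $n\in\mathbb{N}$, set $p_{2n}=\frac12\left(1-\tan^2\left(\frac{\pi}{4n}\right)\right)$ and $H=K_{2n}$. Then for all $p\in[p_{2n},1]$, \[\min\left\{\mathbb{P}\left[|C_1(\mathbf{H}_\mu)|>n\right]:\ \mu\in\mathcal{M}_{1,\geq p}(K_{2n})\right\}=1-\binom{2n}{n}\left(\frac{1-p}{2}\right)^n.\]
   Context: $K_{2n}$ is the complete graph on $2n$ vertices. A random graph model on $H$ is a probability measure $\mu$ on subsets of $E(H)$, and $\mathbf{H}_\mu$ is the random spanning subgraph of $H$ with edge set distributed according to $\mu$. $\mu$ is $1$-independent if for all sets $A,B\subseteq E(H)$ whose edges span disjoint vertex sets, $E(\mathbf{H}_\mu)\cap A$ and $E(\mathbf{H}_\mu)\cap B$ are independent. $\mathcal{M}_{1,\geq p}(H)$ is the set of $1$-independent measures on $H$ in which each edge is present with probability at least $p$. $C_1(F)$ denotes a largest connected component of the spanning subgraph $(V(H),F)$, and $|C_1|$ its number of vertices. *)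

theory Defs
  imports "HOL-Probability.Probability"
begin

definition Kverts :: "nat \<Rightarrow> nat set" where
  "Kverts n = {0..<2*n}"

definition complete_edges :: "'a set \<Rightarrow> 'a set set" where
  "complete_edges V = {e. \<exists>u v. u \<in> V \<and> v \<in> V \<and> u \<noteq> v \<and> e = {u, v}}"

definition random_graph_model :: "'a set set \<Rightarrow> 'a set set pmf \<Rightarrow> bool" where
  "random_graph_model E \<mu> \<longleftrightarrow> set_pmf \<mu> \<subseteq> Pow E"

definition one_independent :: "'a set set \<Rightarrow> 'a set set pmf \<Rightarrow> bool" where
  "one_independent E \<mu> \<longleftrightarrow>
     (\<forall>A B. A \<subseteq> E \<longrightarrow> B \<subseteq> E \<longrightarrow> \<Union>A \<inter> \<Union>B = {} \<longrightarrow>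
        (\<forall>X Y. measure_pmf.prob \<mu> {F. F \<inter> A = X \<and> F \<inter> B = Y}
               = measure_pmf.prob \<mu> {F. F \<inter> A = X} * measure_pmf.prob \<mu> {F. F \<inter> B = Y}))"

definition M1_ge :: "real \<Rightarrow> 'a set set \<Rightarrow> 'a set set pmf set" where
  "M1_ge p E = {\<mu>. random_graph_model E \<mu> \<and> one_independent E \<mu> \<and>
                   (\<forall>e\<in>E. measure_pmf.prob \<mu> {F. e \<in> F} \<ge> p)}"

definition component :: "'a set \<Rightarrow> 'a set set \<Rightarrow> 'a \<Rightarrow> 'a set" where
  "component V F v = {w \<in> V. (v, w) \<in> {(x, y). {x, y} \<in> F}\<^sup>*}"

definition largest_comp_size :: "'a set \<Rightarrow> 'a set set \<Rightarrow> nat" where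
  "largest_comp_size V F = Max ((\<lambda>v. card (component V F v)) ` V)"

end

theory Submission
  imports Defs
begin

text \<open>If every component of the random graph has at most n vertices, pairing up vertices of
  different components shows that the complement of the graph has at least n! perfect matchings.
  The edges of a perfect matching are vertex-disjoint, so by 1-independence they are all absent
  with probability at most (1-p)^n, and the expected number of perfect matchings of non-edges is
  at most (2n)!/(2^n n!) (1-p)^n. Hence P[|C_1| \<le> n] \<le> binom(2n,n) ((1-p)/2)^n.

  Equality is attained by colouring each vertex independently, black with probability (1+t)/2
  and white with probability (1-t)/2 where t^2 = 2p - 1, and keeping exactly the monochromatic
  edges: an edge is present with probability ((1+t)/2)^2 + ((1-t)/2)^2 = p, and |C_1| \<le> n
  exactly when both colour classes have n vertices. For p < 1/2 the parameter t is imaginary;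
  the colourings then have complex weights, and the probability of a colouring is taken to be
  the real part of its weight. An event determined by the edges inside a vertex set U depends
  on the colouring of U only up to swapping the colours, which conjugates t, so its weight is
  real; as weights are multiplicative over disjoint vertex sets, this gives 1-independence.
  The hypothesis on p guarantees that the arguments of all weights lie in [-pi/2, pi/2],
  i.e. that their real parts are nonnegative.\<close>

lemma expectation_eq_sum_prob:
  fixes \<phi> :: "'b \<Rightarrow> real"
  assumes "finite K" "\<And>x. key x \<in> K"
  shows "measure_pmf.expectation \<mu> (\<lambda>x. \<phi> (key x))
    = (\<Sum>k\<in>K. \<phi> k * measure_pmf.prob \<mu> {x. key x = k})"
proof -
  have "measure_pmf.expectation \<mu> (\<lambda>x. \<phi> (key x)) = measure_pmf.expectation (map_pmf key \<mu>) \<phi>"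
    by simp
  also have "\<dots> = (\<Sum>k\<in>K. \<phi> k * pmf (map_pmf key \<mu>) k)"
    by (rule integral_measure_pmf_real) (use assms in auto)
  also have "\<dots> = (\<Sum>k\<in>K. \<phi> k * measure_pmf.prob \<mu> {x. key x = k})"
    by (simp add: pmf_map vimage_def)
  finally show ?thesis .
qed

lemma one_independent_expectation_mult:
  fixes f g :: "'a set set \<Rightarrow> real"
  assumes "finite E" "one_independent E \<mu>" "A \<subseteq> E" "B \<subseteq> E" "\<Union>A \<inter> \<Union>B = {}"
  shows "measure_pmf.expectation \<mu> (\<lambda>F. f (F \<inter> A) * g (F \<inter> B))
       = measure_pmf.expectation \<mu> (\<lambda>F. f (F \<inter> A)) * measure_pmf.expectation \<mu> (\<lambda>F. g (F \<inter> B))"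
proof -
  have fin: "finite (Pow A)" "finite (Pow B)"
    using assms(1,3,4) by (auto intro: finite_subset)
  have "measure_pmf.expectation \<mu> (\<lambda>F. f (F \<inter> A) * g (F \<inter> B))
      = (\<Sum>k\<in>Pow A \<times> Pow B. f (fst k) * g (snd k) * measure_pmf.prob \<mu> {F. (F \<inter> A, F \<inter> B) = k})"
    using expectation_eq_sum_prob[where K = "Pow A \<times> Pow B" and key = "\<lambda>F. (F \<inter> A, F \<inter> B)"
        and \<phi> = "\<lambda>k. f (fst k) * g (snd k)"] fin
    by simp
  also have "\<dots> = (\<Sum>X\<in>Pow A. \<Sum>Y\<in>Pow B.
      (f X * measure_pmf.prob \<mu> {F. F \<inter> A = X}) * (g Y * measure_pmf.prob \<mu> {F. F \<inter> B = Y}))"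
    using assms(2-5) unfolding sum.cartesian_product one_independent_def
    by (auto intro!: sum.cong simp: mult_ac)
  also have "\<dots> = measure_pmf.expectation \<mu> (\<lambda>F. f (F \<inter> A))
      * measure_pmf.expectation \<mu> (\<lambda>F. g (F \<inter> B))"
    using expectation_eq_sum_prob[OF fin(1), of "\<lambda>F. F \<inter> A" \<mu> f]
      expectation_eq_sum_prob[OF fin(2), of "\<lambda>F. F \<inter> B" \<mu> g]
    by (simp add: sum_product)
  finally show ?thesis .
qed

lemma complete_edges_subset_Pow: "complete_edges V \<subseteq> Pow V"
  unfolding complete_edges_def by blast

lemma finite_complete_edges: "finite V \<Longrightarrow> finite (complete_edges V)"
  using complete_edges_subset_Pow by (rule finite_subset) simp

lemma insert_in_complete_edges: "u \<in> V \<Longrightarrow> v \<in> V \<Longrightarrow> u \<noteq> v \<Longrightarrow> {u, v} \<in> complete_edges V"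
  unfolding complete_edges_def by blast

lemma complete_edges_mono: "U \<subseteq> V \<Longrightarrow> complete_edges U \<subseteq> complete_edges V"
  unfolding complete_edges_def by blast

lemma Union_complete_edges_subset: "\<Union>(complete_edges V) \<subseteq> V"
  unfolding complete_edges_def by blast

lemma M1_geD:
  assumes "\<mu> \<in> M1_ge p E"
  shows "set_pmf \<mu> \<subseteq> Pow E" "one_independent E \<mu>"
    "\<And>e. e \<in> E \<Longrightarrow> p \<le> measure_pmf.prob \<mu> {F. e \<in> F}"
  using assms by (auto simp: M1_ge_def random_graph_model_def)

lemma integrable_M1_ge:
  fixes f :: "'a set set \<Rightarrow> real"
  assumes "finite E" "\<mu> \<in> M1_ge p E"
  shows "integrable (measure_pmf \<mu>) f"
  using M1_geD(1)[OF assms(2)] assms(1)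
  by (intro integrable_measure_pmf_finite) (auto intro: finite_subset)

section \<open>Perfect matchings of non-edges\<close>

text \<open>For \<open>card S = 2 * k\<close>, \<open>pairings R k S\<close> is the number of perfect matchings of \<open>S\<close>
  all of whose pairs are \<open>R\<close>-related, counted by the choice of the partner of the least element.\<close>

fun pairings :: "('a::linorder \<Rightarrow> 'a \<Rightarrow> bool) \<Rightarrow> nat \<Rightarrow> 'a set \<Rightarrow> real" where
  "pairings R 0 S = 1"
| "pairings R (Suc k) S =
     (\<Sum>u\<in>S - {Min S}. if R (Min S) u then pairings R k (S - {Min S, u}) else 0)"

lemma pairings_nonneg: "0 \<le> pairings R k S"
  by (induction k arbitrary: S) (simp_all add: sum_nonneg)

lemma pairings_cong:
  assumes "finite S" "\<And>u v. u \<in> S \<Longrightarrow> v \<in> S \<Longrightarrow> u \<noteq> v \<Longrightarrow> R u v = R' u v"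
  shows "pairings R k S = pairings R' k S"
  using assms
proof (induction k arbitrary: S)
  case (Suc k)
  show ?case
  proof (cases "S = {}")
    case False
    then have "Min S \<in> S" using Suc.prems(1) by simp
    then show ?thesis
      using Suc.prems by (simp only: pairings.simps) (intro sum.cong refl if_cong Suc.IH; auto)
  qed simp
qed simp

lemma card_classes_Diff_le:
  assumes "finite S" "u \<in> S" "v \<in> S"
    and bounded: "\<forall>x\<in>S. card {y\<in>S. cls y = cls x} \<le> Suc k"
    and full: "\<forall>x\<in>S - {v, u}. card {y\<in>S. cls y = cls x} = Suc k \<longrightarrow> cls x = cls v \<or> cls x = cls u"
  shows "\<forall>x\<in>S - {v, u}. card {y\<in>S - {v, u}. cls y = cls x} \<le> k"
proof
  fix x assume x: "x \<in> S - {v, u}"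
  let ?C = "{y\<in>S. cls y = cls x}"
  have fin_C: "finite ?C" using assms(1) by simp
  show "card {y\<in>S - {v, u}. cls y = cls x} \<le> k"
  proof (cases "card ?C = Suc k")
    case True
    then have "cls x = cls v \<or> cls x = cls u" using full x by blast
    then obtain w where w: "w \<in> {v, u}" "cls x = cls w" by blast
    then have "{y\<in>S - {v, u}. cls y = cls x} \<subseteq> ?C - {w}" by blast
    moreover have "w \<in> S" using w(1) assms(2,3) by blast
    then have "w \<in> ?C" using w(2) by simp
    then have "card (?C - {w}) = k" using True by (simp only: card_Diff_singleton)
    ultimately show ?thesis using card_mono[of "?C - {w}"] fin_C by simp
  next
    case False
    moreover have "card ?C \<le> Suc k" using bounded x by blast
    moreover have "{y\<in>S - {v, u}. cls y = cls x} \<subseteq> ?C" by blast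
    then have "card {y\<in>S - {v, u}. cls y = cls x} \<le> card ?C"
      using fin_C by (rule card_mono[rotated])
    ultimately show ?thesis by linarith
  qed
qed

lemma two_full_classes_cover:
  assumes "finite S" "card S = 2 * m" "a \<noteq> b"
    and "card {y\<in>S. cls y = a} = m" "card {y\<in>S. cls y = b} = m"
  shows "{y\<in>S. cls y = a} \<union> {y\<in>S. cls y = b} = S"
proof -
  have "card ({y\<in>S. cls y = a} \<union> {y\<in>S. cls y = b}) = card S"
    using assms by (subst card_Un_disjoint) auto
  then show ?thesis using assms(1) by (intro card_subset_eq) auto
qed

lemma obtain_partners:
  assumes fin: "finite S" and card: "card S = 2 * Suc k" and "v \<in> S"
    and bounded: "\<forall>x\<in>S. card {y\<in>S. cls y = cls x} \<le> Suc k"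
  obtains G where "G \<subseteq> S - {v}" "Suc k \<le> card G" "\<forall>u\<in>G. cls u \<noteq> cls v"
    "\<forall>u\<in>G. \<forall>x\<in>S - {v, u}. card {y\<in>S. cls y = cls x} = Suc k \<longrightarrow> cls x = cls v \<or> cls x = cls u"
proof (cases "\<exists>x\<in>S. card {y\<in>S. cls y = cls x} = Suc k \<and> cls x \<noteq> cls v")
  case True
  then obtain x where x: "card {y\<in>S. cls y = cls x} = Suc k" "cls x \<noteq> cls v" by blast
  have full: "cls z = cls v \<or> cls z = cls x" if "card {y\<in>S. cls y = cls z} = Suc k" for z
  proof (rule disjCI)
    assume "cls z \<noteq> cls x"
    then have "v \<in> {y\<in>S. cls y = cls z} \<union> {y\<in>S. cls y = cls x}"
      using two_full_classes_cover[OF fin card _ that x(1)] \<open>v \<in> S\<close> by blast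
    then show "cls z = cls v" using x(2) by auto
  qed
  show ?thesis
  proof (rule that[of "{y\<in>S. cls y = cls x}"])
    show "{y\<in>S. cls y = cls x} \<subseteq> S - {v}" "\<forall>u\<in>{y\<in>S. cls y = cls x}. cls u \<noteq> cls v"
      using x(2) by auto
    show "\<forall>u\<in>{y\<in>S. cls y = cls x}. \<forall>z\<in>S - {v, u}.
        card {y\<in>S. cls y = cls z} = Suc k \<longrightarrow> cls z = cls v \<or> cls z = cls u"
      using full by auto
  qed (use x(1) in simp)
next
  case False
  let ?C = "{y\<in>S. cls y = cls v}"
  have "card (S - ?C) = card S - card ?C"
    using fin by (intro card_Diff_subset) auto
  moreover have "card ?C \<le> Suc k" using bounded \<open>v \<in> S\<close> by blast
  ultimately have "Suc k \<le> card (S - ?C)" using card by arith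
  then show ?thesis
    using False by (intro that[of "S - ?C"]) auto
qed

lemma fact_le_pairings:
  assumes "finite S" "card S = 2 * k"
    and "\<forall>x\<in>S. card {y\<in>S. cls y = cls x} \<le> k"
    and "\<forall>u\<in>S. \<forall>v\<in>S. cls u \<noteq> cls v \<longrightarrow> R u v"
  shows "fact k \<le> pairings R k S"
  using assms
proof (induction k arbitrary: S)
  case (Suc k)
  define v where "v = Min S"
  have "S \<noteq> {}" using Suc.prems(2) by auto
  then have "v \<in> S" unfolding v_def using Suc.prems(1) by simp
  obtain G where G: "G \<subseteq> S - {v}" "Suc k \<le> card G" "\<forall>u\<in>G. cls u \<noteq> cls v"
    "\<forall>u\<in>G. \<forall>x\<in>S - {v, u}. card {y\<in>S. cls y = cls x} = Suc k \<longrightarrow> cls x = cls v \<or> cls x = cls u"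
    using obtain_partners[OF Suc.prems(1,2) \<open>v \<in> S\<close> Suc.prems(3)] by blast
  have partner: "fact k \<le> (if R v u then pairings R k (S - {v, u}) else 0)" if "u \<in> G" for u
  proof -
    have u: "u \<in> S" "u \<noteq> v" "cls u \<noteq> cls v" using G(1,3) that by auto
    have "fact k \<le> pairings R k (S - {v, u})"
    proof (rule Suc.IH)
      show "finite (S - {v, u})" using Suc.prems(1) by simp
      show "card (S - {v, u}) = 2 * k"
        using Suc.prems(1,2) u \<open>v \<in> S\<close> by (simp add: card_Diff_subset)
      show "\<forall>x\<in>S - {v, u}. card {y\<in>S - {v, u}. cls y = cls x} \<le> k"
        using card_classes_Diff_le[OF Suc.prems(1) u(1) \<open>v \<in> S\<close> Suc.prems(3)] G(4) that by blast
      show "\<forall>a\<in>S - {v, u}. \<forall>b\<in>S - {v, u}. cls a \<noteq> cls b \<longrightarrow> R a b"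
        using Suc.prems(4) by blast
    qed
    moreover have "R v u" using Suc.prems(4) u \<open>v \<in> S\<close> by metis
    ultimately show ?thesis by simp
  qed
  have "fact (Suc k) \<le> real (card G) * fact k"
    using G(2) by (simp add: mult_right_mono)
  also have "\<dots> \<le> (\<Sum>u\<in>G. if R v u then pairings R k (S - {v, u}) else 0)"
    using sum_mono[OF partner] by simp
  also have "\<dots> \<le> (\<Sum>u\<in>S - {v}. if R v u then pairings R k (S - {v, u}) else 0)"
    using Suc.prems(1) G(1) by (intro sum_mono2) (auto simp: pairings_nonneg)
  also have "\<dots> = pairings R (Suc k) S" unfolding v_def by simp
  finally show ?case .
qed simp

lemma expectation_absent_edge_pairings:
  fixes V :: "'a::linorder set"
  assumes fin: "finite V" and \<mu>: "\<mu> \<in> M1_ge p (complete_edges V)"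
    and e: "u \<in> V" "v \<in> V" "u \<noteq> v" and S: "S \<subseteq> V - {u, v}"
  shows "measure_pmf.expectation \<mu>
      (\<lambda>F. if {u, v} \<notin> F then pairings (\<lambda>a b. {a, b} \<notin> F) k S else 0)
    = (1 - measure_pmf.prob \<mu> {F. {u, v} \<in> F})
      * measure_pmf.expectation \<mu> (\<lambda>F. pairings (\<lambda>a b. {a, b} \<notin> F) k S)"
proof -
  let ?e = "{u, v}" and ?B = "complete_edges S"
  let ?absent = "\<lambda>X. if X = {} then 1 else 0 :: real"
  let ?count = "\<lambda>F. pairings (\<lambda>a b. {a, b} \<notin> F) k S"
  have fin_S: "finite S" using S fin by (auto intro: finite_subset)
  have restrict: "?count F = ?count (F \<inter> ?B)" for F
    using fin_S by (intro pairings_cong) (auto simp: insert_in_complete_edges)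
  have "measure_pmf.expectation \<mu> (\<lambda>F. if ?e \<notin> F then ?count F else 0)
      = measure_pmf.expectation \<mu> (\<lambda>F. ?absent (F \<inter> {?e}) * ?count (F \<inter> ?B))"
    using restrict by (auto intro!: Bochner_Integration.integral_cong)
  also have "\<dots> = measure_pmf.expectation \<mu> (\<lambda>F. ?absent (F \<inter> {?e}))
      * measure_pmf.expectation \<mu> (\<lambda>F. ?count (F \<inter> ?B))"
  proof (rule one_independent_expectation_mult)
    show "{?e} \<subseteq> complete_edges V" using e by (simp add: insert_in_complete_edges)
    show "?B \<subseteq> complete_edges V" using S by (intro complete_edges_mono) auto
    show "\<Union>{?e} \<inter> \<Union>?B = {}" using S Union_complete_edges_subset[of S] by auto
  qed (use finite_complete_edges[OF fin] M1_geD(2)[OF \<mu>] in auto)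
  also have "(\<lambda>F. ?absent (F \<inter> {?e})) = indicator (- {F. ?e \<in> F})"
    by (auto simp: indicator_def)
  also have "measure_pmf.expectation \<mu> (indicator (- {F. ?e \<in> F}))
      = 1 - measure_pmf.prob \<mu> {F. ?e \<in> F}"
    using measure_pmf.prob_compl[of "{F. ?e \<in> F}" \<mu>] by (simp add: Compl_eq_Diff_UNIV)
  finally show ?thesis using restrict by simp
qed

lemma expectation_pairings_non_edges_le:
  fixes V :: "'a::linorder set"
  assumes fin: "finite V" and \<mu>: "\<mu> \<in> M1_ge p (complete_edges V)"
    and "S \<subseteq> V" "card S = 2 * k"
  shows "measure_pmf.expectation \<mu> (\<lambda>F. pairings (\<lambda>u v. {u, v} \<notin> F) k S)
    \<le> fact (2 * k) / (2 ^ k * fact k) * (1 - p) ^ k"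
  using assms(3,4)
proof (induction k arbitrary: S)
  case (Suc k)
  have fin_S: "finite S" using Suc.prems(1) fin by (rule finite_subset)
  define v where "v = Min S"
  have "S \<noteq> {}" using Suc.prems(2) by auto
  then have "v \<in> S" unfolding v_def using fin_S by simp
  define bound where "bound = fact (2 * k) / (2 ^ k * fact k) * (1 - p) ^ k"
  have partner: "measure_pmf.expectation \<mu>
      (\<lambda>F. if {v, u} \<notin> F then pairings (\<lambda>a b. {a, b} \<notin> F) k (S - {v, u}) else 0) \<le> (1 - p) * bound"
    if u: "u \<in> S - {v}" for u
  proof -
    have "{v, u} \<in> complete_edges V"
      using u \<open>v \<in> S\<close> Suc.prems(1) by (intro insert_in_complete_edges) auto
    then have absent: "1 - measure_pmf.prob \<mu> {F. {v, u} \<in> F} \<le> 1 - p"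
      using M1_geD(3)[OF \<mu>] by simp
    have "measure_pmf.expectation \<mu> (\<lambda>F. pairings (\<lambda>a b. {a, b} \<notin> F) k (S - {v, u})) \<le> bound"
      unfolding bound_def using Suc.prems u \<open>v \<in> S\<close> fin_S
      by (intro Suc.IH) (auto simp: card_Diff_subset)
    then show ?thesis
      using u \<open>v \<in> S\<close> Suc.prems(1)
      by (subst expectation_absent_edge_pairings[OF fin \<mu>])
        (auto intro!: mult_mono[OF absent] Bochner_Integration.integral_nonneg pairings_nonneg
          order_trans[OF _ absent])
  qed
  have "measure_pmf.expectation \<mu> (\<lambda>F. pairings (\<lambda>u v. {u, v} \<notin> F) (Suc k) S)
      = (\<Sum>u\<in>S - {v}. measure_pmf.expectation \<mu>
          (\<lambda>F. if {v, u} \<notin> F then pairings (\<lambda>a b. {a, b} \<notin> F) k (S - {v, u}) else 0))"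
    unfolding v_def using integrable_M1_ge[OF finite_complete_edges[OF fin] \<mu>]
    by (simp add: Bochner_Integration.integral_sum)
  also have "\<dots> \<le> (\<Sum>u\<in>S - {v}. (1 - p) * bound)"
    by (rule sum_mono) (rule partner)
  also have "\<dots> = (2 * k + 1) * (1 - p) * bound"
    using fin_S Suc.prems(2) \<open>v \<in> S\<close> by simp
  also have "\<dots> = fact (2 * Suc k) / (2 ^ Suc k * fact (Suc k)) * (1 - p) ^ Suc k"
  proof -
    have "fact (2 * Suc k) = 2 * (real k + 1) * ((2 * real k + 1) * fact (2 * k))"
      "2 ^ Suc k * fact (Suc k) = 2 * (real k + 1) * (2 ^ k * fact k)"
      by (simp_all add: algebra_simps)
    then have "fact (2 * Suc k) / (2 ^ Suc k * fact (Suc k))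
        = (2 * real k + 1) * (fact (2 * k) / (2 ^ k * fact k))"
      by (simp only: mult_divide_mult_cancel_left) simp
    then show ?thesis unfolding bound_def by (simp add: algebra_simps)
  qed
  finally show ?case .
qed simp

lemma mem_component: "v \<in> V \<Longrightarrow> v \<in> component V F v"
  unfolding component_def by simp

lemma component_eq_if_edge:
  assumes "{u, v} \<in> F"
  shows "component V F u = component V F v"
proof -
  let ?R = "{(x, y). {x, y} \<in> F}"
  have "(u, v) \<in> ?R" "(v, u) \<in> ?R" using assms by (auto simp: insert_commute)
  then show ?thesis
    unfolding component_def
    using converse_rtrancl_into_rtrancl[of u v ?R] converse_rtrancl_into_rtrancl[of v u ?R] by blast
qed

lemma fact_le_pairings_non_edges:
  fixes V :: "'a::linorder set"
  assumes fin: "finite V" and card: "card V = 2 * n" and small: "largest_comp_size V F \<le> n"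
  shows "fact n \<le> pairings (\<lambda>u v. {u, v} \<notin> F) n V"
proof (rule fact_le_pairings[where cls = "component V F"])
  show "\<forall>x\<in>V. card {y\<in>V. component V F y = component V F x} \<le> n"
  proof
    fix x assume "x \<in> V"
    have "{y\<in>V. component V F y = component V F x} \<subseteq> component V F x"
      using mem_component[of _ V F] by force
    then have "card {y\<in>V. component V F y = component V F x} \<le> card (component V F x)"
      by (rule card_mono[rotated]) (simp add: component_def fin)
    also have "\<dots> \<le> largest_comp_size V F"
      unfolding largest_comp_size_def using fin \<open>x \<in> V\<close> by (intro Max_ge) auto
    finally show "card {y\<in>V. component V F y = component V F x} \<le> n" using small by simp
  qed
  show "\<forall>u\<in>V. \<forall>v\<in>V. component V F u \<noteq> component V F v \<longrightarrow> {u, v} \<notin> F"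
    by (metis component_eq_if_edge)
qed (use fin card in auto)

lemma prob_largest_component_gt_ge:
  fixes V :: "'a::linorder set"
  assumes fin: "finite V" and card: "card V = 2 * n" and \<mu>: "\<mu> \<in> M1_ge p (complete_edges V)"
  shows "1 - real ((2 * n) choose n) * ((1 - p) / 2) ^ n
    \<le> measure_pmf.prob \<mu> {F. n < largest_comp_size V F}"
proof -
  let ?small = "{F. largest_comp_size V F \<le> n}"
  have "fact n * measure_pmf.prob \<mu> ?small
      = measure_pmf.expectation \<mu> (\<lambda>F. fact n * indicator ?small F)"
    by simp
  also have "\<dots> \<le> measure_pmf.expectation \<mu> (\<lambda>F. pairings (\<lambda>u v. {u, v} \<notin> F) n V)"
    using integrable_M1_ge[OF finite_complete_edges[OF fin] \<mu>]
    by (intro integral_mono)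
      (auto simp: indicator_def pairings_nonneg fact_le_pairings_non_edges[OF fin card])
  also have "\<dots> \<le> fact (2 * n) / (2 ^ n * fact n) * (1 - p) ^ n"
    using expectation_pairings_non_edges_le[OF fin \<mu> _ card] by simp
  also have "\<dots> = fact n * (real ((2 * n) choose n) * ((1 - p) / 2) ^ n)"
    by (simp add: binomial_fact power_divide field_simps)
  finally have "measure_pmf.prob \<mu> ?small \<le> real ((2 * n) choose n) * ((1 - p) / 2) ^ n"
    by simp
  moreover have "measure_pmf.prob \<mu> {F. n < largest_comp_size V F} = 1 - measure_pmf.prob \<mu> ?small"
    using measure_pmf.prob_compl[of ?small \<mu>] by (simp add: Diff_eq not_le Compl_eq)
  ultimately show ?thesis by simp
qed

section \<open>Signed random colourings\<close>

definition colour_weight :: "complex \<Rightarrow> bool \<Rightarrow> complex" where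
  "colour_weight t b = (if b then 1 + t else 1 - t) / 2"

definition colouring_weight :: "complex \<Rightarrow> 'a set \<Rightarrow> 'a set \<Rightarrow> complex" where
  "colouring_weight t U X = (\<Prod>v\<in>U. colour_weight t (v \<in> X))"

definition colouring_sum :: "complex \<Rightarrow> 'a set \<Rightarrow> ('a set \<Rightarrow> real) \<Rightarrow> complex" where
  "colouring_sum t U g = (\<Sum>X\<in>Pow U. of_real (g X) * colouring_weight t U X)"

lemma sum_Pow_Un_mult:
  fixes f g :: "'a set \<Rightarrow> 'b::comm_semiring_0"
  assumes "finite A" "finite B" "A \<inter> B = {}"
  shows "(\<Sum>S\<in>Pow (A \<union> B). f (S \<inter> A) * g (S \<inter> B)) = (\<Sum>X\<in>Pow A. f X) * (\<Sum>Y\<in>Pow B. g Y)"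
proof -
  have "bij_betw (\<lambda>(X, Y). X \<union> Y) (Pow A \<times> Pow B) (Pow (A \<union> B))"
    by (rule bij_betwI[where g = "\<lambda>S. (S \<inter> A, S \<inter> B)"]) (use assms(3) in auto)
  then have "(\<Sum>S\<in>Pow (A \<union> B). f (S \<inter> A) * g (S \<inter> B))
      = (\<Sum>(X, Y)\<in>Pow A \<times> Pow B. f ((X \<union> Y) \<inter> A) * g ((X \<union> Y) \<inter> B))"
    by (simp add: sum.reindex_bij_betw[symmetric] case_prod_beta)
  also have "\<dots> = (\<Sum>(X, Y)\<in>Pow A \<times> Pow B. f X * g Y)"
  proof (rule sum.cong[OF refl], clarsimp)
    fix X Y assume "X \<subseteq> A" "Y \<subseteq> B"
    then have "(X \<union> Y) \<inter> A = X" "(X \<union> Y) \<inter> B = Y" using assms(3) by auto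
    then show "f ((X \<union> Y) \<inter> A) * g ((X \<union> Y) \<inter> B) = f X * g Y" by simp
  qed
  also have "\<dots> = (\<Sum>X\<in>Pow A. f X) * (\<Sum>Y\<in>Pow B. g Y)"
    by (simp add: sum.cartesian_product sum_product)
  finally show ?thesis .
qed

lemma colouring_weight_Un:
  assumes "finite A" "finite B" "A \<inter> B = {}"
  shows "colouring_weight t (A \<union> B) S = colouring_weight t A (S \<inter> A) * colouring_weight t B (S \<inter> B)"
  unfolding colouring_weight_def prod.union_disjoint[OF assms]
  by (auto intro!: arg_cong2[where f = "(*)"] prod.cong)

lemma colouring_sum_Un:
  assumes "finite A" "finite B" "A \<inter> B = {}"
  shows "colouring_sum t (A \<union> B) (\<lambda>S. g (S \<inter> A) * h (S \<inter> B))
    = colouring_sum t A g * colouring_sum t B h"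
  unfolding colouring_sum_def colouring_weight_Un[OF assms]
  using sum_Pow_Un_mult[OF assms, of "\<lambda>X. of_real (g X) * colouring_weight t A X"
      "\<lambda>Y. of_real (h Y) * colouring_weight t B Y"]
  by (simp add: mult_ac)

lemma colouring_sum_one:
  assumes "finite U"
  shows "colouring_sum t U (\<lambda>_. 1) = 1"
  using assms
proof (induction U rule: finite_induct)
  case (insert v U)
  have "Pow {v} = {{}, {v}}" by blast
  then have "colouring_sum t {v} (\<lambda>_. 1) = 1"
    by (simp add: colouring_sum_def colouring_weight_def colour_weight_def
        add_divide_distrib[symmetric])
  moreover have "colouring_sum t ({v} \<union> U) (\<lambda>S. 1 * 1)
      = colouring_sum t {v} (\<lambda>_. 1) * colouring_sum t U (\<lambda>_. 1)"
    using insert.hyps by (intro colouring_sum_Un) auto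
  ultimately show ?case using insert.IH by simp
qed (simp add: colouring_sum_def colouring_weight_def)

lemma sum_Re_colouring_weight:
  assumes "finite U"
  shows "(\<Sum>X\<in>Pow U. Re (colouring_weight t U X)) = 1"
proof -
  have "(\<Sum>X\<in>Pow U. Re (colouring_weight t U X)) = Re (colouring_sum t U (\<lambda>_. 1))"
    by (simp add: colouring_sum_def Re_sum)
  then show ?thesis by (simp add: colouring_sum_one[OF assms])
qed

lemma colouring_sum_restrict:
  assumes "finite V" "U \<subseteq> V"
  shows "colouring_sum t V (\<lambda>S. g (S \<inter> U)) = colouring_sum t U g"
proof -
  have "colouring_sum t (U \<union> (V - U)) (\<lambda>S. g (S \<inter> U) * 1)
      = colouring_sum t U g * colouring_sum t (V - U) (\<lambda>_. 1)"
    using assms by (intro colouring_sum_Un) (auto intro: finite_subset)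
  then show ?thesis
    using assms by (simp add: colouring_sum_one Un_absorb1)
qed

lemma colouring_sum_mult:
  assumes "finite V" "U \<subseteq> V" "W \<subseteq> V" "U \<inter> W = {}"
  shows "colouring_sum t V (\<lambda>S. g (S \<inter> U) * h (S \<inter> W)) = colouring_sum t U g * colouring_sum t W h"
proof -
  have "colouring_sum t V (\<lambda>S. g (S \<inter> U) * h (S \<inter> W))
      = colouring_sum t V (\<lambda>S. (\<lambda>X. g (X \<inter> U) * h (X \<inter> W)) (S \<inter> (U \<union> W)))"
    by (simp add: Int_assoc)
  also have "\<dots> = colouring_sum t (U \<union> W) (\<lambda>X. g (X \<inter> U) * h (X \<inter> W))"
    using assms by (intro colouring_sum_restrict) auto
  also have "\<dots> = colouring_sum t U g * colouring_sum t W h"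
    using assms by (intro colouring_sum_Un) (auto intro: finite_subset)
  finally show ?thesis .
qed

lemma cnj_colouring_sum: "cnj (colouring_sum t U g) = colouring_sum (cnj t) U g"
proof -
  have "cnj (colour_weight t b) = colour_weight (cnj t) b" for b
    by (simp add: colour_weight_def)
  then show ?thesis by (simp add: colouring_sum_def colouring_weight_def)
qed

lemma colouring_sum_uminus:
  assumes "finite U"
  shows "colouring_sum (- t) U g = colouring_sum t U (\<lambda>X. g (U - X))"
  unfolding colouring_sum_def
proof (rule sum.reindex_bij_witness[of _ "\<lambda>X. U - X" "\<lambda>X. U - X"])
  fix X assume "X \<in> Pow U"
  then show "U - (U - X) = X" "U - X \<in> Pow U" by auto
  have "colouring_weight t U (U - X) = colouring_weight (- t) U X"
    unfolding colouring_weight_def by (intro prod.cong) (auto simp: colour_weight_def)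
  then show "of_real (g (U - (U - X))) * colouring_weight t U (U - X)
      = of_real (g X) * colouring_weight (- t) U X"
    using \<open>X \<in> Pow U\<close> by (simp add: double_diff)
qed auto

lemma Im_colouring_sum_eq_0:
  assumes "cnj t = t \<or> cnj t = - t" "finite U" "\<And>X. X \<subseteq> U \<Longrightarrow> g (U - X) = g X"
  shows "Im (colouring_sum t U g) = 0"
proof -
  have "colouring_sum t U (\<lambda>X. g (U - X)) = colouring_sum t U g"
    unfolding colouring_sum_def using assms(3) by (intro sum.cong) auto
  then have "colouring_sum (- t) U g = colouring_sum t U g"
    by (simp add: colouring_sum_uminus[OF assms(2)])
  then have "cnj (colouring_sum t U g) = colouring_sum t U g"
    using assms(1) by (auto simp: cnj_colouring_sum)
  then have "Im (cnj (colouring_sum t U g)) = Im (colouring_sum t U g)" by simp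
  then show ?thesis by simp
qed

lemma colouring_weight_card:
  assumes "finite V" "S \<subseteq> V"
  shows "colouring_weight t V S
    = colour_weight t True ^ card S * colour_weight t False ^ card (V - S)"
proof -
  have "colouring_weight t (S \<union> (V - S)) S
      = colouring_weight t S S * colouring_weight t (V - S) (S \<inter> (V - S))"
    using assms colouring_weight_Un[of S "V - S" t S] by (simp add: finite_subset)
  then show ?thesis
    using assms by (simp add: colouring_weight_def Un_absorb1)
qed

lemma Re_colouring_weight_of_real_nonneg:
  assumes "\<bar>s\<bar> \<le> 1"
  shows "0 \<le> Re (colouring_weight (of_real s) V S)"
proof -
  have "colouring_weight (of_real s) V S = of_real (\<Prod>v\<in>V. (if v \<in> S then 1 + s else 1 - s) / 2)"
    unfolding colouring_weight_def colour_weight_def of_real_prod by (intro prod.cong) auto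
  then have "Re (colouring_weight (of_real s) V S) = (\<Prod>v\<in>V. (if v \<in> S then 1 + s else 1 - s) / 2)"
    by (simp only: Re_complex_of_real)
  also have "0 \<le> \<dots>"
    using assms by (intro prod_nonneg) auto
  finally show ?thesis .
qed

lemma colour_weight_ii_tan:
  assumes "cos \<phi> \<noteq> 0"
  shows "colour_weight (\<i> * of_real (tan \<phi>)) b = cis (if b then \<phi> else - \<phi>) / of_real (2 * cos \<phi>)"
  using assms by (intro complex_eqI) (auto simp: colour_weight_def tan_def field_simps)

lemma Re_colouring_weight_ii_tan:
  assumes "finite V" "S \<subseteq> V" "cos \<phi> \<noteq> 0"
  shows "Re (colouring_weight (\<i> * of_real (tan \<phi>)) V S)
    = cos ((real (card S) - real (card (V - S))) * \<phi>) / (2 * cos \<phi>) ^ card V"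
proof -
  let ?k = "card S" and ?m = "card (V - S)"
  have card: "?k + ?m = card V"
    using assms(1,2) by (metis card_Diff_subset card_mono finite_subset le_add_diff_inverse)
  have "colouring_weight (\<i> * of_real (tan \<phi>)) V S
      = (cis \<phi> ^ ?k * cis (- \<phi>) ^ ?m) / of_real ((2 * cos \<phi>) ^ (?k + ?m))"
    unfolding colouring_weight_card[OF assms(1,2)] colour_weight_ii_tan[OF assms(3)]
    by (simp add: power_divide power_add)
  also have "cis \<phi> ^ ?k * cis (- \<phi>) ^ ?m = cis ((real ?k - real ?m) * \<phi>)"
    unfolding Complex.DeMoivre cis_mult by (simp add: algebra_simps)
  finally show ?thesis by (simp only: card Re_divide_of_real cis.sel(1))
qed

lemma Re_colouring_weight_ii_tan_nonneg:
  assumes "finite V" "card V = 2 * n" "S \<subseteq> V" "0 \<le> \<phi>" "\<phi> \<le> pi / (4 * real n)"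
  shows "0 \<le> Re (colouring_weight (\<i> * of_real (tan \<phi>)) V S)"
proof (cases "n = 0")
  case False
  have "\<bar>real (card S) - real (card (V - S))\<bar> \<le> 2 * real n"
    using assms(1-3) card_mono[OF assms(1,3)] by (simp add: card_Diff_subset finite_subset)
  then have "\<bar>(real (card S) - real (card (V - S))) * \<phi>\<bar> \<le> 2 * real n * (pi / (4 * real n))"
    unfolding abs_mult using assms(4,5) by (intro mult_mono) auto
  also have "\<dots> = pi / 2" using False by (simp add: field_simps)
  finally have "0 \<le> cos ((real (card S) - real (card (V - S))) * \<phi>)"
    by (intro cos_ge_zero) auto
  moreover have "0 < cos \<phi>"
  proof (rule cos_gt_zero_pi)
    have "pi / (4 * real n) \<le> pi / 4" using False by (intro divide_left_mono) auto
    then show "- (pi / 2) < \<phi>" "\<phi> < pi / 2" using assms(4,5) pi_gt_zero by linarith+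
  qed
  ultimately show ?thesis
    using assms(1,3) by (simp add: Re_colouring_weight_ii_tan)
qed (use assms in \<open>simp add: colouring_weight_def\<close>)

lemma Re_colouring_weight_csqrt_nonneg:
  assumes n: "1 \<le> n" and p: "(1 - tan (pi / (4 * real n)) ^ 2) / 2 \<le> p" "p \<le> 1"
    and V: "finite V" "card V = 2 * n" "S \<subseteq> V"
  shows "0 \<le> Re (colouring_weight (csqrt (of_real (2 * p - 1))) V S)"
proof (cases "0 \<le> 2 * p - 1")
  case True
  then show ?thesis
    using p(2) by (simp add: csqrt_of_real Re_colouring_weight_of_real_nonneg)
next
  case False
  define \<phi> where "\<phi> = arctan (sqrt (1 - 2 * p))"
  have t: "csqrt (of_real (2 * p - 1)) = \<i> * of_real (tan \<phi>)"
    using False by (simp add: \<phi>_def csqrt_of_real' tan_arctan)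
  have bounds: "0 < pi / (4 * real n)" "pi / (4 * real n) < pi / 2"
    using n by (simp_all add: field_simps)
  then have "sqrt (1 - 2 * p) \<le> tan (pi / (4 * real n))"
    using p(1) by (simp add: real_le_lsqrt tan_gt_zero less_imp_le)
  then have "\<phi> \<le> arctan (tan (pi / (4 * real n)))"
    unfolding \<phi>_def by (rule arctan_monotone')
  also have "\<dots> = pi / (4 * real n)"
    using bounds by (intro arctan_tan) auto
  finally have "\<phi> \<le> pi / (4 * real n)" .
  moreover have "0 \<le> \<phi>" using False by (simp add: \<phi>_def)
  ultimately show ?thesis
    unfolding t using V by (intro Re_colouring_weight_ii_tan_nonneg)
qed

definition monochromatic_edges :: "'a set \<Rightarrow> 'a set \<Rightarrow> 'a set set" where
  "monochromatic_edges V S = {e \<in> complete_edges V. e \<subseteq> S \<or> e \<inter> S = {}}"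

lemma monochromatic_edges_Int_Union:
  "monochromatic_edges V (S \<inter> \<Union>A) \<inter> A = monochromatic_edges V S \<inter> A"
  unfolding monochromatic_edges_def by blast

lemma monochromatic_edges_Diff:
  "Z \<subseteq> \<Union>A \<Longrightarrow> monochromatic_edges V (\<Union>A - Z) \<inter> A = monochromatic_edges V Z \<inter> A"
  unfolding monochromatic_edges_def by blast

lemma component_monochromatic_edges:
  assumes "v \<in> V"
  shows "component V (monochromatic_edges V S) v = {w\<in>V. w \<in> S \<longleftrightarrow> v \<in> S}"
proof -
  let ?R = "{(x, y). {x, y} \<in> monochromatic_edges V S}"
  have edge: "y \<in> S \<longleftrightarrow> x \<in> S" if "(x, y) \<in> ?R" for x y
    using that complete_edges_subset_Pow[of V] unfolding monochromatic_edges_def by auto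
  have "w \<in> S \<longleftrightarrow> v \<in> S" if "(v, w) \<in> ?R\<^sup>*" for w
    using that
  proof induction
    case (step y z)
    then show ?case using edge[of y z] by blast
  qed simp
  moreover have "(v, w) \<in> ?R\<^sup>*" if "w \<in> V" "w \<in> S \<longleftrightarrow> v \<in> S" for w
  proof (cases "w = v")
    case False
    then have "{v, w} \<in> monochromatic_edges V S"
      using that assms by (auto simp: monochromatic_edges_def insert_in_complete_edges)
    then show ?thesis by auto
  qed simp
  ultimately show ?thesis unfolding component_def by blast
qed

lemma largest_comp_size_monochromatic_edges:
  assumes "finite V" "card V = 2 * n" "1 \<le> n" "S \<subseteq> V"
  shows "n < largest_comp_size V (monochromatic_edges V S) \<longleftrightarrow> card S \<noteq> n"
proof -
  have card_Diff: "card (V - S) = 2 * n - card S"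
    using assms by (simp add: card_Diff_subset finite_subset)
  have comp: "component V (monochromatic_edges V S) v = (if v \<in> S then S else V - S)"
    if "v \<in> V" for v
    using that assms(4) by (auto simp: component_monochromatic_edges)
  have "n < largest_comp_size V (monochromatic_edges V S)
      \<longleftrightarrow> (\<exists>v\<in>V. n < card (component V (monochromatic_edges V S) v))"
    unfolding largest_comp_size_def using assms(1-3) by (subst Max_gr_iff) auto
  also have "\<dots> \<longleftrightarrow> (\<exists>v\<in>V. n < card (if v \<in> S then S else V - S))"
    using comp by (intro bex_cong refl) presburger
  also have "\<dots> \<longleftrightarrow> card S \<noteq> n"
  proof
    assume "card S \<noteq> n"
    then consider "n < card S" | "n < card (V - S)" using card_Diff by linarith
    then show "\<exists>v\<in>V. n < card (if v \<in> S then S else V - S)"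
    proof cases
      case 1
      then obtain v where "v \<in> S" by (metis all_not_in_conv card.empty not_less0)
      then show ?thesis using 1 assms(4) by auto
    next
      case 2
      then obtain v where "v \<in> V - S" by (metis all_not_in_conv card.empty not_less0)
      then show ?thesis using 2 by auto
    qed
  qed (use card_Diff in \<open>auto split: if_splits\<close>)
  finally show ?thesis .
qed

text \<open>Unless the real parts of the weights are nonnegative (they always sum to 1),
  \<open>embed_pmf\<close> yields an unspecified distribution here.\<close>

definition colouring_pmf :: "complex \<Rightarrow> 'a set \<Rightarrow> 'a set pmf" where
  "colouring_pmf t V = embed_pmf (\<lambda>S. if S \<subseteq> V then Re (colouring_weight t V S) else 0)"

definition colouring_model :: "complex \<Rightarrow> 'a set \<Rightarrow> 'a set set pmf" where
  "colouring_model t V = map_pmf (monochromatic_edges V) (colouring_pmf t V)"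

locale signed_colouring =
  fixes t :: complex and V :: "'a set"
  assumes finite: "finite V"
    and real_or_imaginary: "cnj t = t \<or> cnj t = - t"
    and weight_nonneg: "\<And>S. S \<subseteq> V \<Longrightarrow> 0 \<le> Re (colouring_weight t V S)"
begin

lemma pmf_colouring_pmf:
  "pmf (colouring_pmf t V) S = (if S \<subseteq> V then Re (colouring_weight t V S) else 0)"
proof -
  let ?f = "\<lambda>S. if S \<subseteq> V then Re (colouring_weight t V S) else 0"
  have "(\<Sum>S\<in>Pow V. ennreal (?f S)) = ennreal (\<Sum>S\<in>Pow V. ?f S)"
    using weight_nonneg by (intro sum_ennreal) auto
  also have "(\<Sum>S\<in>Pow V. ?f S) = 1"
    using sum_Re_colouring_weight[OF finite, of t] by simp
  finally have "(\<integral>\<^sup>+S. ennreal (?f S) \<partial>count_space UNIV) = 1"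
    using finite by (subst nn_integral_count_space'[of "Pow V"]) auto
  then show ?thesis
    unfolding colouring_pmf_def using weight_nonneg by (subst pmf_embed_pmf) auto
qed

lemma prob_colouring_pmf:
  "measure_pmf.prob (colouring_pmf t V) Q = Re (colouring_sum t V (indicator Q))"
proof -
  have "measure_pmf.prob (colouring_pmf t V) Q
      = measure_pmf.expectation (colouring_pmf t V) (indicator Q)"
    by simp
  also have "\<dots> = (\<Sum>S\<in>Pow V. indicator Q S * pmf (colouring_pmf t V) S)"
    using finite by (intro integral_measure_pmf_real)
      (auto simp: set_pmf_eq pmf_colouring_pmf split: if_splits)
  finally show ?thesis
    by (simp add: pmf_colouring_pmf colouring_sum_def Re_sum)
qed

lemma prob_colouring_model:
  "measure_pmf.prob (colouring_model t V) Q
    = Re (colouring_sum t V (\<lambda>S. if monochromatic_edges V S \<in> Q then 1 else 0))"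
proof -
  have "indicator (monochromatic_edges V -` Q)
      = (\<lambda>S. if monochromatic_edges V S \<in> Q then 1 else 0 :: real)"
    by (auto simp: indicator_def)
  then show ?thesis
    unfolding colouring_model_def measure_map_pmf prob_colouring_pmf by simp
qed

lemma prob_colouring_model_Int:
  assumes "\<Union>A \<subseteq> V"
  shows "measure_pmf.prob (colouring_model t V) {F. P (F \<inter> A)}
    = Re (colouring_sum t (\<Union>A) (\<lambda>Z. if P (monochromatic_edges V Z \<inter> A) then 1 else 0))"
  unfolding prob_colouring_model colouring_sum_restrict[OF finite assms, symmetric]
  by (simp add: monochromatic_edges_Int_Union)

lemma one_independent_colouring_model: "one_independent (complete_edges V) (colouring_model t V)"
  unfolding one_independent_def
proof (intro allI impI)
  fix A B X Y :: "'a set set"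
  assume "A \<subseteq> complete_edges V" "B \<subseteq> complete_edges V" and disj: "\<Union>A \<inter> \<Union>B = {}"
  then have UA: "\<Union>A \<subseteq> V" and UB: "\<Union>B \<subseteq> V"
    using Union_complete_edges_subset[of V] by blast+
  define g where "g = (\<lambda>Z. if monochromatic_edges V Z \<inter> A = X then 1 else 0 :: real)"
  define h where "h = (\<lambda>Z. if monochromatic_edges V Z \<inter> B = Y then 1 else 0 :: real)"
  have "(\<lambda>S. if monochromatic_edges V S \<in> {F. F \<inter> A = X \<and> F \<inter> B = Y} then 1 else 0)
      = (\<lambda>S. g (S \<inter> \<Union>A) * h (S \<inter> \<Union>B))"
    by (rule ext) (simp add: g_def h_def monochromatic_edges_Int_Union)
  then have "measure_pmf.prob (colouring_model t V) {F. F \<inter> A = X \<and> F \<inter> B = Y}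
      = Re (colouring_sum t (\<Union>A) g * colouring_sum t (\<Union>B) h)"
    using UA UB disj by (simp add: prob_colouring_model colouring_sum_mult[OF finite])
  also have "\<dots> = Re (colouring_sum t (\<Union>A) g) * Re (colouring_sum t (\<Union>B) h)"
    using Im_colouring_sum_eq_0[OF real_or_imaginary finite_subset[OF UA finite], of g]
    by (simp add: g_def monochromatic_edges_Diff)
  also have "\<dots> = measure_pmf.prob (colouring_model t V) {F. F \<inter> A = X}
      * measure_pmf.prob (colouring_model t V) {F. F \<inter> B = Y}"
    using prob_colouring_model_Int[OF UA, of "\<lambda>F. F = X"]
      prob_colouring_model_Int[OF UB, of "\<lambda>F. F = Y"]
    by (simp add: g_def h_def)
  finally show "measure_pmf.prob (colouring_model t V) {F. F \<inter> A = X \<and> F \<inter> B = Y}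
    = measure_pmf.prob (colouring_model t V) {F. F \<inter> A = X}
      * measure_pmf.prob (colouring_model t V) {F. F \<inter> B = Y}" .
qed

lemma prob_edge_colouring_model:
  assumes "e \<in> complete_edges V"
  shows "measure_pmf.prob (colouring_model t V) {F. e \<in> F} = Re ((1 + t\<^sup>2) / 2)"
proof -
  obtain a b where ab: "a \<in> V" "b \<in> V" "a \<noteq> b" "e = {a, b}"
    using assms unfolding complete_edges_def by blast
  have "{F. e \<in> F} = {F. F \<inter> {e} \<noteq> {}}" by blast
  moreover have "e \<in> monochromatic_edges V Z \<longleftrightarrow> (a \<in> Z \<longleftrightarrow> b \<in> Z)" for Z
    using assms ab(3,4) by (auto simp: monochromatic_edges_def)
  moreover have "Pow {a, b} = {{}, {a}, {b}, {a, b}}" by blast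
  ultimately show ?thesis
    using prob_colouring_model_Int[of "{e}" "\<lambda>X. X \<noteq> {}"] ab
    by (simp add: colouring_sum_def colouring_weight_def colour_weight_def
        power2_eq_square field_simps)
qed

lemma prob_largest_component_colouring_model:
  assumes "card V = 2 * n" "1 \<le> n"
  shows "measure_pmf.prob (colouring_model t V) {F. n < largest_comp_size V F}
    = 1 - (\<Sum>S | S \<subseteq> V \<and> card S = n. Re (colouring_weight t V S))"
proof -
  have "measure_pmf.prob (colouring_model t V) {F. n < largest_comp_size V F}
      = (\<Sum>S\<in>Pow V. Re (colouring_weight t V S)
          - (if card S = n then Re (colouring_weight t V S) else 0))"
    unfolding prob_colouring_model colouring_sum_def Re_sum
    using largest_comp_size_monochromatic_edges[OF finite assms] by (intro sum.cong) auto
  also have "\<dots> = 1 - (\<Sum>S\<in>Pow V. if card S = n then Re (colouring_weight t V S) else 0)"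
    by (simp add: sum_subtractf sum_Re_colouring_weight[OF finite])
  also have "(\<Sum>S\<in>Pow V. if card S = n then Re (colouring_weight t V S) else 0)
      = (\<Sum>S | S \<subseteq> V \<and> card S = n. Re (colouring_weight t V S))"
    using finite by (simp add: sum.If_cases Int_def)
  finally show ?thesis .
qed

end

lemma colouring_model_extremal:
  assumes V: "finite V" "card V = 2 * n" and n: "1 \<le> n"
    and p: "(1 - tan (pi / (4 * real n)) ^ 2) / 2 \<le> p" "p \<le> 1"
  defines "t \<equiv> csqrt (of_real (2 * p - 1))"
  shows "colouring_model t V \<in> M1_ge p (complete_edges V)"
    and "measure_pmf.prob (colouring_model t V) {F. n < largest_comp_size V F}
      = 1 - real ((2 * n) choose n) * ((1 - p) / 2) ^ n"
proof -
  interpret signed_colouring t V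
  proof
    show "cnj t = t \<or> cnj t = - t" unfolding t_def csqrt_of_real' by simp
    show "0 \<le> Re (colouring_weight t V S)" if "S \<subseteq> V" for S
      unfolding t_def using n p V that by (rule Re_colouring_weight_csqrt_nonneg)
  qed (fact V)
  have t2: "t\<^sup>2 = of_real (2 * p - 1)" by (simp add: t_def)
  have "set_pmf (colouring_model t V) \<subseteq> Pow (complete_edges V)"
    by (auto simp: colouring_model_def monochromatic_edges_def)
  then show "colouring_model t V \<in> M1_ge p (complete_edges V)"
    unfolding M1_ge_def random_graph_model_def
    using one_independent_colouring_model prob_edge_colouring_model by (simp add: t2)
  have weight: "Re (colouring_weight t V S) = ((1 - p) / 2) ^ n" if "S \<subseteq> V" "card S = n" for S
  proof -
    have "card (V - S) = n" using that V by (simp add: card_Diff_subset finite_subset)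
    then have "colouring_weight t V S = (colour_weight t True * colour_weight t False) ^ n"
      using colouring_weight_card[OF V(1) that(1)] that(2) by (simp add: power_mult_distrib)
    also have "colour_weight t True * colour_weight t False = (1 - t\<^sup>2) / 4"
      by (simp add: colour_weight_def power2_eq_square field_simps)
    also have "\<dots> = of_real ((1 - p) / 2)"
      unfolding t2 by (simp add: field_simps)
    finally show ?thesis by (simp flip: of_real_power)
  qed
  have "(\<Sum>S | S \<subseteq> V \<and> card S = n. Re (colouring_weight t V S))
      = real (card {S. S \<subseteq> V \<and> card S = n}) * ((1 - p) / 2) ^ n"
    using weight by simp
  also have "card {S. S \<subseteq> V \<and> card S = n} = (2 * n) choose n"
    using n_subsets[OF V(1)] V(2) by simp
  finally show "measure_pmf.prob (colouring_model t V) {F. n < largest_comp_size V F}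
      = 1 - real ((2 * n) choose n) * ((1 - p) / 2) ^ n"
    using prob_largest_component_colouring_model[OF V(2) n] by simp
qed

theorem proposition16:
  fixes n :: nat and p :: real
  assumes "n \<ge> 1"
    and "(1 - tan (pi / (4 * real n)) ^ 2) / 2 \<le> p" and "p \<le> 1"
  shows "(\<exists>\<mu>\<in>M1_ge p (complete_edges (Kverts n)).
            measure_pmf.prob \<mu> {F. largest_comp_size (Kverts n) F > n}
              = 1 - real ((2 * n) choose n) * ((1 - p) / 2) ^ n)
       \<and> (\<forall>\<mu>\<in>M1_ge p (complete_edges (Kverts n)).
            measure_pmf.prob \<mu> {F. largest_comp_size (Kverts n) F > n}
              \<ge> 1 - real ((2 * n) choose n) * ((1 - p) / 2) ^ n)"
proof -
  have V: "finite (Kverts n)" "card (Kverts n) = 2 * n" by (simp_all add: Kverts_def)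
  show ?thesis
    using colouring_model_extremal[OF V assms] prob_largest_component_gt_ge[OF V] by blast
qed

end
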